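(* Let $\mathcal{A}\subseteq M_2(\mathbb{C})$ be the algebra of upper triangular $2\times 2$ matrices $\begin{pmatrix}\alpha&\beta\\0&\gamma\end{pmatrix}$, and for $c\in\mathbb{C}\setminus\{0\}$ let $V_c=\left\{\begin{pmatrix} y & x\\ 0 & y+cx\end{pmatrix} : x,y\in\mathbb{C}\right\}$. Then for every $c\in\mathbb{C}\setminus\{0\}$ and every $\phi\in\Phi(\mathcal{A})$, $\phi\colon\mathcal{A}\to\mathcal{B}\subseteq\mathbf{B}(\mathcal{H})$, with $\mathcal{A}_\phi = V_c$, we have $\|\phi\|\,\|\phi^{-1}\| \ge \frac{1}{|c|}$.
   Context: $\Phi(\mathcal{A})$ is the set of injective homomorphisms $\phi\colon\mathcal{A}\to\mathcal{B}$ onto an operator algebra $\mathcal{B}\subseteq\mathbf{B}(\mathcal{H})$ with $\|\phi\|_{cb}<\infty$ and $\|\phi^{-1}\|_{cb}<\infty$ (cb norms with respect to matrix norms inherited from $M_n(\mathbf{B}(\mathcal{H}))$, and the norm of $M_2(\mathbb{C})$ on $\mathcal{A}$); $\mathcal{A}_\phi=\phi^{-1}(\mathcal{B}\cap\mathcal{B}^* )$, where $\mathcal{B}^*$ is the set of adjoints of elements of $\mathcal{B}$. Here $\|\phi\|,\|\phi^{-1}\|$ are the ordinary operator norms. *)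

theory Defs
  imports "HOL-Analysis.Analysis"
begin

text \<open>A complex Hilbert space: a real Banach space carrying a compatible complex
  scalar multiplication and a complex inner product (linear in the second
  argument) inducing the norm.\<close>

class chilbert = banach +
  fixes cscale :: "complex \<Rightarrow> 'a \<Rightarrow> 'a"
    and cinner :: "'a \<Rightarrow> 'a \<Rightarrow> complex"
  assumes cscale_add_right: "cscale a (x + y) = cscale a x + cscale a y"
    and cscale_add_left: "cscale (a + b) x = cscale a x + cscale b x"
    and cscale_cscale: "cscale a (cscale b x) = cscale (a * b) x"
    and cscale_one: "cscale 1 x = x"
    and cscale_of_real: "cscale (complex_of_real r) x = scaleR r x"
    and cinner_cnj: "cinner x y = cnj (cinner y x)"
    and cinner_add_right: "cinner x (y + z) = cinner x y + cinner x z"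
    and cinner_cscale_right: "cinner x (cscale a y) = a * cinner x y"
    and norm_cinner: "norm x = sqrt (Re (cinner x x))"

definition bounded_op :: "('h::chilbert \<Rightarrow> 'h) \<Rightarrow> bool" where
  "bounded_op T \<longleftrightarrow> (\<forall>x y. T (x + y) = T x + T y) \<and> (\<forall>a x. T (cscale a x) = cscale a (T x))
     \<and> (\<exists>K. \<forall>x. norm (T x) \<le> K * norm x)"

definition is_adjoint :: "('h::chilbert \<Rightarrow> 'h) \<Rightarrow> ('h \<Rightarrow> 'h) \<Rightarrow> bool" where
  "is_adjoint S T \<longleftrightarrow> (\<forall>x y. cinner (T x) y = cinner x (S y))"

definition mat2 :: "complex \<Rightarrow> complex \<Rightarrow> complex \<Rightarrow> complex \<Rightarrow> complex^2^2" where
  "mat2 a b c d = vector [vector [a, b], vector [c, d]]"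

definition upper_tri :: "(complex^2^2) set" where
  "upper_tri = {mat2 \<alpha> \<beta> 0 \<gamma> | \<alpha> \<beta> \<gamma>. True}"

definition V :: "complex \<Rightarrow> (complex^2^2) set" where
  "V c = {mat2 y x 0 (y + c * x) | x y. True}"

text \<open>Operator (spectral) norm of a 2x2 matrix, acting on the Hilbert space C^2.\<close>
definition mnorm :: "complex^2^2 \<Rightarrow> real" where
  "mnorm a = onorm (\<lambda>v. a *v v)"

definition smat :: "complex \<Rightarrow> complex^2^2 \<Rightarrow> complex^2^2" where
  "smat s a = (\<chi> i j. s * a $ i $ j)"

text \<open>Norm of an n x n matrix (T i j) of operators on a normed space E, regarded as
  an operator on the l2-direct sum E^n.\<close>
definition mat_opnorm :: "nat \<Rightarrow> (nat \<Rightarrow> nat \<Rightarrow> 'e::real_normed_vector \<Rightarrow> 'e) \<Rightarrow> real" where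
  "mat_opnorm n T = Sup {sqrt (\<Sum>i<n. (norm (\<Sum>j<n. T i j (x j)))\<^sup>2) | x.
                           (\<Sum>j<n. (norm (x j))\<^sup>2) \<le> 1}"

text \<open>Norm on M_n(A), inherited from M_n(M_2(C)) = M_2n(C).\<close>
definition Mn_norm_A :: "nat \<Rightarrow> (nat \<Rightarrow> nat \<Rightarrow> complex^2^2) \<Rightarrow> real" where
  "Mn_norm_A n a = mat_opnorm n (\<lambda>i j v. a i j *v v)"

text \<open>The set Phi(A): injective algebra homomorphisms phi of A onto B = phi(A),
  a subalgebra of B(H), with phi and phi^{-1} completely bounded.\<close>
definition Phi :: "(complex^2^2) set \<Rightarrow> (complex^2^2 \<Rightarrow> ('h::chilbert \<Rightarrow> 'h)) set" where
  "Phi A = {\<phi>. (\<forall>a\<in>A. bounded_op (\<phi> a))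
      \<and> (\<forall>a\<in>A. \<forall>b\<in>A. \<phi> (a + b) = (\<lambda>x. \<phi> a x + \<phi> b x))
      \<and> (\<forall>s. \<forall>a\<in>A. \<phi> (smat s a) = (\<lambda>x. cscale s (\<phi> a x)))
      \<and> (\<forall>a\<in>A. \<forall>b\<in>A. \<phi> (a ** b) = \<phi> a \<circ> \<phi> b)
      \<and> inj_on \<phi> A
      \<and> (\<exists>K. \<forall>n a. (\<forall>i<n. \<forall>j<n. a i j \<in> A) \<longrightarrow>
             mat_opnorm n (\<lambda>i j. \<phi> (a i j)) \<le> K * Mn_norm_A n a)
      \<and> (\<exists>K. \<forall>n a. (\<forall>i<n. \<forall>j<n. a i j \<in> A) \<longrightarrow>
             Mn_norm_A n a \<le> K * mat_opnorm n (\<lambda>i j. \<phi> (a i j)))}"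

text \<open>A_phi = phi^{-1}(B \<inter> B^*), with B = phi(A).\<close>
definition A_phi :: "(complex^2^2) set \<Rightarrow> (complex^2^2 \<Rightarrow> ('h::chilbert \<Rightarrow> 'h)) \<Rightarrow> (complex^2^2) set" where
  "A_phi A \<phi> = {a \<in> A. \<exists>b\<in>A. is_adjoint (\<phi> a) (\<phi> b)}"

text \<open>Ordinary norms of phi and of phi^{-1} (B \<rightarrow> A).\<close>
definition phi_norm :: "(complex^2^2) set \<Rightarrow> (complex^2^2 \<Rightarrow> ('h::chilbert \<Rightarrow> 'h)) \<Rightarrow> real" where
  "phi_norm A \<phi> = Sup {onorm (\<phi> a) | a. a \<in> A \<and> mnorm a \<le> 1}"

definition phi_inv_norm :: "(complex^2^2) set \<Rightarrow> (complex^2^2 \<Rightarrow> ('h::chilbert \<Rightarrow> 'h)) \<Rightarrow> real" where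
  "phi_inv_norm A \<phi> = Sup {mnorm a | a. a \<in> A \<and> onorm (\<phi> a) \<le> 1}"

end

theory Submission imports Defs begin

text \<open>The matrix P with entries 0, 1/c, 0, 1 lies in V c and is idempotent. Every
  element of V c is a polynomial in P, so V c is commutative; hence the image of P is
  an idempotent whose adjoint (the image of an element of A_phi = V c) commutes with
  it. A normal idempotent is an orthogonal projection, so the image of P has norm at
  most 1, while P itself has norm at least its entry 1/|c|: thus the norm of phi^{-1}
  is at least 1/|c|. On the other hand phi maps the identity matrix, of norm 1, to a
  nonzero idempotent, which has norm at least 1.\<close>

lemma cinner_zero_right [simp]: "cinner (x::'h::chilbert) 0 = 0"
  using cinner_add_right[of x 0 0] by simp

lemma cinner_add_left: "cinner ((x::'h::chilbert) + y) z = cinner x z + cinner y z"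
  by (metis cinner_cnj cinner_add_right complex_cnj_add)

lemma power2_norm_eq_cinner: "(norm (x::'h::chilbert))\<^sup>2 = Re (cinner x x)"
proof -
  have "0 \<le> Re (cinner x x)"
    by (metis norm_cinner norm_ge_zero real_sqrt_ge_0_iff)
  then show ?thesis by (simp add: norm_cinner)
qed

lemma bounded_op_imp_bounded_linear: "bounded_op (T::'h::chilbert \<Rightarrow> 'h) \<Longrightarrow> bounded_linear T"
  unfolding bounded_op_def
  by (metis (no_types, lifting) bounded_linear_intro cscale_of_real mult.commute)

lemma is_adjoint_sym: "is_adjoint S (T::'h::chilbert \<Rightarrow> 'h) \<Longrightarrow> is_adjoint T S"
  unfolding is_adjoint_def by (metis cinner_cnj)

lemma norm_eq_norm_adjoint_if_commute:
  fixes T S :: "'h::chilbert \<Rightarrow> 'h"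
  assumes "is_adjoint S T" and "T \<circ> S = S \<circ> T"
  shows "norm (T x) = norm (S x)"
proof -
  have "(norm (T x))\<^sup>2 = Re (cinner x (S (T x)))"
    using assms(1) by (simp add: power2_norm_eq_cinner is_adjoint_def)
  also have "\<dots> = (norm (S x))\<^sup>2"
    using assms is_adjoint_sym[OF assms(1)]
    by (simp add: power2_norm_eq_cinner is_adjoint_def fun_eq_iff)
  finally show ?thesis by (simp add: power2_eq_iff_nonneg)
qed

text \<open>x = T x + (x - T x) is an orthogonal decomposition: T kills x - T x, hence so does
  its adjoint, which makes x - T x orthogonal to the range of T.\<close>
lemma onorm_normal_idempotent_le_1:
  fixes T S :: "'h::chilbert \<Rightarrow> 'h"
  assumes "bounded_linear T" and "is_adjoint S T" and "T \<circ> S = S \<circ> T" and "T \<circ> T = T"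
  shows "onorm T \<le> 1"
proof (rule onorm_bound)
  fix x
  define u where "u = x - T x"
  have "T u = 0"
    using assms(4) linear_diff[OF bounded_linear.linear[OF assms(1)]]
    by (simp add: u_def fun_eq_iff)
  then have "S u = 0"
    using norm_eq_norm_adjoint_if_commute[OF assms(2,3), of u] by simp
  then have orth: "cinner (T x) u = 0" "cinner u (T x) = 0"
    using assms(2) cinner_cnj[of u "T x"] by (simp_all add: is_adjoint_def)
  have "(norm x)\<^sup>2 = (norm (T x + u))\<^sup>2"
    by (simp add: u_def)
  also have "\<dots> = (norm (T x))\<^sup>2 + (norm u)\<^sup>2"
    by (simp add: power2_norm_eq_cinner cinner_add_left cinner_add_right orth)
  finally have "(norm (T x))\<^sup>2 \<le> (norm x)\<^sup>2"
    using zero_le_power2[of "norm u"] by linarith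
  then show "norm (T x) \<le> 1 * norm x"
    using power2_le_imp_le[OF _ norm_ge_zero] by simp
qed simp

lemma onorm_idempotent_ge_1:
  fixes T :: "'a::real_normed_vector \<Rightarrow> 'a"
  assumes "bounded_linear T" and "T \<circ> T = T" and "T \<noteq> (\<lambda>x. 0)"
  shows "1 \<le> onorm T"
proof -
  obtain x where "T x \<noteq> 0"
    using assms(3) by auto
  moreover have "norm (T (T x)) \<le> onorm T * norm (T x)"
    using onorm[OF assms(1)] .
  ultimately show ?thesis
    using assms(2) by (simp add: fun_eq_iff)
qed

lemma sup_norm_unit_ball_eq_onorm:
  assumes "bounded_linear f"
  shows "Sup {norm (f x) | x. norm x \<le> 1} = onorm f"
proof -
  interpret f: bounded_linear f by fact
  let ?S = "{norm (f x) | x. norm x \<le> 1}"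
  have ub: "y \<le> onorm f" if "y \<in> ?S" for y
    using that onorm[OF assms] onorm_pos_le[OF assms]
    by (force intro: order_trans mult_left_le)
  have bdd: "bdd_above ?S"
    using ub by (auto simp: bdd_above_def)
  have zero: "0 \<in> ?S"
    by (rule CollectI, rule exI[of _ 0]) (simp add: f.zero)
  have "onorm f \<le> Sup ?S"
  proof (rule onorm_bound)
    show "0 \<le> Sup ?S"
      using cSup_upper[OF zero bdd] .
    fix x :: 'a
    show "norm (f x) \<le> Sup ?S * norm x"
    proof (cases "x = 0")
      case False
      have "norm (f (scaleR (1 / norm x) x)) \<in> ?S"
        by force
      then have "norm (f x) / norm x \<le> Sup ?S"
        using cSup_upper[OF _ bdd] by (simp add: f.scaleR divide_inverse mult.commute)
      with False show ?thesis
        by (simp add: divide_le_eq)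
    qed (simp add: f.zero)
  qed
  moreover have "Sup ?S \<le> onorm f"
    using zero ub by (intro cSup_least) auto
  ultimately show ?thesis
    by simp
qed

lemma mat_opnorm_1: "bounded_linear g \<Longrightarrow> mat_opnorm 1 (\<lambda>i j. g) = onorm g"
proof -
  assume g: "bounded_linear g"
  have lessThan_1_nat: "{..<1::nat} = {0}"
    by auto
  have "{sqrt (\<Sum>i<1::nat. (norm (\<Sum>j<1::nat. g (x j)))\<^sup>2) | x. (\<Sum>j<1::nat. (norm (x j))\<^sup>2) \<le> 1}
        = {norm (g x) | x. norm x \<le> 1}"
  proof (intro set_eqI iffI)
    fix y assume "y \<in> {sqrt (\<Sum>i<1::nat. (norm (\<Sum>j<1::nat. g (x j)))\<^sup>2) | x. (\<Sum>j<1::nat. (norm (x j))\<^sup>2) \<le> 1}"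
    then obtain x where "y = norm (g (x 0))" "(norm (x 0))\<^sup>2 \<le> 1"
      using lessThan_1_nat by auto
    then show "y \<in> {norm (g x) | x. norm x \<le> 1}"
      by (auto simp: abs_square_le_1)
  next
    fix y assume "y \<in> {norm (g x) | x. norm x \<le> 1}"
    then obtain x where "y = norm (g x)" "norm x \<le> 1"
      by auto
    then show "y \<in> {sqrt (\<Sum>i<1::nat. (norm (\<Sum>j<1::nat. g (x j)))\<^sup>2) | x. (\<Sum>j<1::nat. (norm (x j))\<^sup>2) \<le> 1}"
      by (intro CollectI exI[of _ "\<lambda>_. x"]) (simp add: power_le_one)
  qed
  then show ?thesis
    unfolding mat_opnorm_def using sup_norm_unit_ball_eq_onorm[OF g] by simp
qed

lemma Mn_norm_A_1: "Mn_norm_A 1 (\<lambda>i j. a) = mnorm a"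
  unfolding Mn_norm_A_def mnorm_def using mat_opnorm_1[of "(*v) a"] by simp

lemma mnorm_nonneg: "0 \<le> mnorm a"
  unfolding mnorm_def by (rule onorm_pos_le) simp

lemma norm_axis_complex_1 [simp]: "norm (axis i (1::complex)) = 1"
  by (rule norm_Basis) (auto simp: Basis_vec_def)

lemma norm_entry_le_mnorm: "norm (a $ i $ j) \<le> mnorm a"
proof -
  have "norm (a $ i $ j) = norm ((a *v axis j 1) $ i)"
    by (simp add: matrix_vector_mult_def axis_def if_distrib cong: if_cong)
  also have "\<dots> \<le> norm (a *v axis j 1)"
    by (rule Finite_Cartesian_Product.norm_nth_le)
  also have "\<dots> \<le> mnorm a * norm (axis j (1::complex))"
    unfolding mnorm_def by (rule onorm) simp
  finally show ?thesis
    by simp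
qed

lemma mnorm_mat_1: "mnorm (mat 1) \<le> 1"
proof -
  have "(*v) (mat 1) = (\<lambda>v::complex^2. v)"
    by (simp add: fun_eq_iff)
  then show ?thesis
    unfolding mnorm_def by (simp add: onorm_id_le)
qed

lemma mat2_mult: "mat2 a b c d ** mat2 e f g h = mat2 (a*e+b*g) (a*f+b*h) (c*e+d*g) (c*f+d*h)"
  by (simp add: mat2_def matrix_matrix_mult_def vec_eq_iff forall_2 sum_2)

lemma mat_1_eq_mat2: "mat 1 = mat2 1 0 0 1"
  by (simp add: mat2_def mat_def vec_eq_iff forall_2)

lemma mat2_nth_1_2 [simp]: "mat2 a b c d $ 1 $ 2 = b"
  by (simp add: mat2_def)

lemma V_commute: "a \<in> V c \<Longrightarrow> b \<in> V c \<Longrightarrow> a ** b = b ** a"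
  unfolding V_def by (auto simp: mat2_mult algebra_simps)

lemma Phi_bounded_linear: "\<phi> \<in> Phi A \<Longrightarrow> a \<in> A \<Longrightarrow> bounded_linear (\<phi> a)"
  unfolding Phi_def by (auto intro: bounded_op_imp_bounded_linear)

lemma Phi_mult: "\<phi> \<in> Phi A \<Longrightarrow> a \<in> A \<Longrightarrow> b \<in> A \<Longrightarrow> \<phi> (a ** b) = \<phi> a \<circ> \<phi> b"
  unfolding Phi_def by blast

lemma Phi_inj_on: "\<phi> \<in> Phi A \<Longrightarrow> inj_on \<phi> A"
  unfolding Phi_def by blast

lemma Phi_onorm_bounded:
  assumes "\<phi> \<in> Phi A"
  shows "\<exists>K. \<forall>a\<in>A. onorm (\<phi> a) \<le> K * mnorm a"
proof -
  obtain K where K: "\<And>n a. \<forall>i<n. \<forall>j<n. a i j \<in> A \<Longrightarrow>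
      mat_opnorm n (\<lambda>i j. \<phi> (a i j)) \<le> K * Mn_norm_A n a"
    using assms unfolding Phi_def by blast
  have "onorm (\<phi> a) \<le> K * mnorm a" if "a \<in> A" for a
    using K[of 1 "\<lambda>i j. a"] that mat_opnorm_1[OF Phi_bounded_linear[OF assms that]]
      Mn_norm_A_1[of a]
    by simp
  then show ?thesis
    by blast
qed

lemma Phi_mnorm_bounded:
  assumes "\<phi> \<in> Phi A"
  shows "\<exists>K. \<forall>a\<in>A. mnorm a \<le> K * onorm (\<phi> a)"
proof -
  obtain K where K: "\<And>n a. \<forall>i<n. \<forall>j<n. a i j \<in> A \<Longrightarrow>
      Mn_norm_A n a \<le> K * mat_opnorm n (\<lambda>i j. \<phi> (a i j))"
    using assms unfolding Phi_def by blast
  have "mnorm a \<le> K * onorm (\<phi> a)" if "a \<in> A" for a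
    using K[of 1 "\<lambda>i j. a"] that mat_opnorm_1[OF Phi_bounded_linear[OF assms that]]
      Mn_norm_A_1[of a]
    by simp
  then show ?thesis
    by blast
qed

lemma bdd_above_bounded_on_unit_ball:
  fixes f g :: "'a \<Rightarrow> real"
  assumes "\<forall>a\<in>A. f a \<le> K * g a" and "\<forall>a\<in>A. 0 \<le> g a"
  shows "bdd_above {f a | a. a \<in> A \<and> g a \<le> 1}"
proof (rule bdd_aboveI)
  fix y assume "y \<in> {f a | a. a \<in> A \<and> g a \<le> 1}"
  then obtain a where a: "y = f a" "a \<in> A" "g a \<le> 1"
    by blast
  then have "y \<le> K * g a"
    using assms(1) by blast
  also have "\<dots> \<le> \<bar>K\<bar> * g a"
    using a(2) assms(2) by (intro mult_right_mono) auto
  also have "\<dots> \<le> \<bar>K\<bar>"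
    using a(3) by (simp add: mult_left_le)
  finally show "y \<le> \<bar>K\<bar>" .
qed

lemma onorm_le_phi_norm:
  assumes "\<phi> \<in> Phi A" and "a \<in> A" and "mnorm a \<le> 1"
  shows "onorm (\<phi> a) \<le> phi_norm A \<phi>"
proof -
  obtain K where "\<forall>a\<in>A. onorm (\<phi> a) \<le> K * mnorm a"
    using Phi_onorm_bounded[OF assms(1)] by blast
  then have "bdd_above {onorm (\<phi> a) | a. a \<in> A \<and> mnorm a \<le> 1}"
    by (intro bdd_above_bounded_on_unit_ball) (auto simp: mnorm_nonneg)
  with assms(2,3) show ?thesis
    unfolding phi_norm_def by (blast intro: cSup_upper)
qed

lemma mnorm_le_phi_inv_norm:
  assumes "\<phi> \<in> Phi A" and "a \<in> A" and "onorm (\<phi> a) \<le> 1"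
  shows "mnorm a \<le> phi_inv_norm A \<phi>"
proof -
  obtain K where "\<forall>a\<in>A. mnorm a \<le> K * onorm (\<phi> a)"
    using Phi_mnorm_bounded[OF assms(1)] by blast
  then have "bdd_above {mnorm a | a. a \<in> A \<and> onorm (\<phi> a) \<le> 1}"
    using Phi_bounded_linear[OF assms(1)]
    by (intro bdd_above_bounded_on_unit_ball) (auto simp: onorm_pos_le)
  with assms(2,3) show ?thesis
    unfolding phi_inv_norm_def by (blast intro: cSup_upper)
qed

lemma phi_norm_ge_1:
  assumes "\<phi> \<in> Phi A" and "mat 1 \<in> A" and "a \<in> A" and "a \<noteq> mat 1"
  shows "1 \<le> phi_norm A \<phi>"
proof -
  have "\<phi> (mat 1) \<noteq> (\<lambda>x. 0)"
  proof
    assume "\<phi> (mat 1) = (\<lambda>x. 0)"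
    then have "\<phi> a = \<phi> (mat 1)"
      using Phi_mult[OF assms(1,2,3)] by (simp add: comp_def)
    then show False
      using inj_onD[OF Phi_inj_on[OF assms(1)]] assms(2-4) by blast
  qed
  then have "1 \<le> onorm (\<phi> (mat 1))"
    using Phi_bounded_linear[OF assms(1,2)] Phi_mult[OF assms(1,2,2)]
    by (intro onorm_idempotent_ge_1) simp_all
  also have "\<dots> \<le> phi_norm A \<phi>"
    using onorm_le_phi_norm[OF assms(1,2) mnorm_mat_1] .
  finally show ?thesis .
qed

text \<open>By symmetry of the adjoint relation, the element whose image is adjoint to the
  image of p lies in A_phi again, so it commutes with p.\<close>
lemma onorm_Phi_idempotent_le_1:
  assumes "\<phi> \<in> Phi A" and "p \<in> A_phi A \<phi>" and "p ** p = p"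
    and "\<forall>b\<in>A_phi A \<phi>. p ** b = b ** p"
  shows "onorm (\<phi> p) \<le> 1"
proof -
  obtain b where b: "b \<in> A" "is_adjoint (\<phi> p) (\<phi> b)"
    using assms(2) unfolding A_phi_def by blast
  have p: "p \<in> A"
    using assms(2) unfolding A_phi_def by blast
  have "b \<in> A_phi A \<phi>"
    using b p is_adjoint_sym unfolding A_phi_def by blast
  then have "\<phi> p \<circ> \<phi> b = \<phi> b \<circ> \<phi> p"
    using assms(4) Phi_mult[OF assms(1)] b(1) p by metis
  then show ?thesis
    using Phi_bounded_linear[OF assms(1) p] is_adjoint_sym[OF b(2)] Phi_mult[OF assms(1) p p] assms(3)
    by (intro onorm_normal_idempotent_le_1[where S = "\<phi> b"]) simp_all
qed

lemma phi_inv_norm_ge_inverse_cmod: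
  assumes "c \<noteq> 0" and "\<phi> \<in> Phi upper_tri" and "A_phi upper_tri \<phi> = V c"
  shows "1 / cmod c \<le> phi_inv_norm upper_tri \<phi>"
proof -
  define P where "P = mat2 0 (1/c) 0 1"
  have "P \<in> V c"
    unfolding V_def P_def using assms(1) by (intro CollectI exI[of _ "1/c"] exI[of _ 0]) simp
  moreover have "P ** P = P"
    by (simp add: P_def mat2_mult)
  ultimately have "onorm (\<phi> P) \<le> 1"
    using assms(2,3) V_commute by (intro onorm_Phi_idempotent_le_1) auto
  moreover have "P \<in> upper_tri"
    unfolding upper_tri_def P_def by blast
  ultimately have "mnorm P \<le> phi_inv_norm upper_tri \<phi>"
    using mnorm_le_phi_inv_norm[OF assms(2)] by blast
  moreover have "1 / cmod c \<le> mnorm P"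
    using norm_entry_le_mnorm[of P 1 2] by (simp add: P_def norm_divide)
  ultimately show ?thesis
    by linarith
qed

theorem lemma2:
  fixes c :: complex and \<phi> :: "complex^2^2 \<Rightarrow> ('h::chilbert \<Rightarrow> 'h)"
  assumes "c \<noteq> 0"
    and "\<phi> \<in> Phi upper_tri"
    and "A_phi upper_tri \<phi> = V c"
  shows "phi_norm upper_tri \<phi> * phi_inv_norm upper_tri \<phi> \<ge> 1 / cmod c"
proof -
  have "mat 1 \<in> upper_tri" and "mat2 0 0 0 0 \<in> upper_tri"
    unfolding upper_tri_def mat_1_eq_mat2 by blast+
  moreover have "mat2 0 0 0 0 \<noteq> (mat 1 :: complex^2^2)"
    unfolding mat_1_eq_mat2 mat2_def by (simp add: vec_eq_iff forall_2)
  ultimately have "1 \<le> phi_norm upper_tri \<phi>"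
    using phi_norm_ge_1[OF assms(2)] by blast
  moreover have "1 / cmod c \<le> phi_inv_norm upper_tri \<phi>"
    using phi_inv_norm_ge_inverse_cmod[OF assms] .
  ultimately show ?thesis
    using mult_mono[of 1 _ "1 / cmod c"] by force
qed

end
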